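(* Let $\epsilon\in\mathbb{R}$ and let $w$ be a basic solution of $\mathcal{L}_\epsilon$. Then $w(r,t)\neq 0$ for every $(r,t)\in(0,\infty)\times\mathbb{S}^1$.
   Context: Fix $a>0$, $b\in\mathbb{R}\setminus\{0\}$, $\nu\in[0,1)$, an integer $k\ge 2$ and $c\in C^k(\mathbb{S}^1,\mathbb{C})$ (functions on $\mathbb{S}^1$ are $2\pi$-periodic functions of $t\in\mathbb{R}$). For $\epsilon\in\mathbb{R}$ put $\lambda_\epsilon=a+ib\epsilon$, $L_\epsilon=\lambda_\epsilon\partial_t-ir\partial_r$ on $(0,\infty)\times\mathbb{S}^1$ (coordinates $(r,t)$), and $\mathcal{L}_\epsilon u=L_\epsilon u+i\lambda_\epsilon\nu u-c(t)\bar u$. A basic solution of $\mathcal{L}_\epsilon$ is a nontrivial solution $w$ of $\mathcal{L}_\epsilon w=0$ on $(0,\infty)\times\mathbb{S}^1$ of the form $w(r,t)=r^\sigma\phi(t)+\overline{r^\sigma\psi(t)}$, with $\sigma\in\mathbb{C}$ and $\phi,\psi$ $2\pi$-periodic $\mathbb{C}$-valued functions. *)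

theory Defs
  imports "HOL-Analysis.Analysis"
begin

text \<open>Functions on the circle S^1 are 2pi-periodic functions of t :: real.\<close>
definition periodic2pi :: "(real \<Rightarrow> 'a) \<Rightarrow> bool" where
  "periodic2pi f \<longleftrightarrow> (\<forall>t. f (t + 2 * pi) = f t)"

definition Ck_fun :: "nat \<Rightarrow> (real \<Rightarrow> complex) \<Rightarrow> bool" where
  "Ck_fun k f \<longleftrightarrow> (\<exists>D :: nat \<Rightarrow> real \<Rightarrow> complex. D 0 = f \<and>
     (\<forall>j<k. \<forall>t. (D j has_vector_derivative D (Suc j) t) (at t)) \<and>
     continuous_on UNIV (D k))"

definition lam :: "real \<Rightarrow> real \<Rightarrow> real \<Rightarrow> complex" where
  "lam a b \<epsilon> = complex_of_real a + \<i> * complex_of_real (b * \<epsilon>)"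

definition solves_Leps ::
  "real \<Rightarrow> real \<Rightarrow> real \<Rightarrow> real \<Rightarrow> (real \<Rightarrow> complex) \<Rightarrow> (real \<Rightarrow> real \<Rightarrow> complex) \<Rightarrow> bool" where
  "solves_Leps a b \<nu> \<epsilon> c w \<longleftrightarrow>
     (\<forall>r>0. \<forall>t. \<exists>Dt Dr.
        ((\<lambda>s. w r s) has_vector_derivative Dt) (at t) \<and>
        ((\<lambda>\<rho>. w \<rho> t) has_vector_derivative Dr) (at r) \<and>
        lam a b \<epsilon> * Dt - \<i> * complex_of_real r * Dr
          + \<i> * lam a b \<epsilon> * complex_of_real \<nu> * w r t - c t * cnj (w r t) = 0)"

definition basic_solution ::
  "real \<Rightarrow> real \<Rightarrow> real \<Rightarrow> real \<Rightarrow> (real \<Rightarrow> complex) \<Rightarrow> (real \<Rightarrow> real \<Rightarrow> complex) \<Rightarrow> bool" where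
  "basic_solution a b \<nu> \<epsilon> c w \<longleftrightarrow>
     solves_Leps a b \<nu> \<epsilon> c w \<and>
     (\<exists>r>0. \<exists>t. w r t \<noteq> 0) \<and>
     (\<exists>(\<sigma>::complex) (\<phi>::real \<Rightarrow> complex) (\<psi>::real \<Rightarrow> complex).
        periodic2pi \<phi> \<and> periodic2pi \<psi> \<and>
        (\<forall>r>0. \<forall>t. w r t = complex_of_real r powr \<sigma> * \<phi> t
                         + cnj (complex_of_real r powr \<sigma> * \<psi> t)))"

end

(* Write w = r^\<sigma> \<phi>(t) + conj (r^\<sigma> \<psi>(t)). Since r \<partial>_r r^\<sigma> = \<sigma> r^\<sigma>, the equation
   becomes an ODE in t on each circle {r} x S^1. Suppose w(r0,t0) = 0.
   * If \<sigma> is real, w = r^\<sigma> u(t), where u solves a linear ODE whose coefficients are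
     continuous (c is C^1); a Gronwall estimate for |u|^2 propagates the zero, so u = 0.
   * If \<sigma> is not real, two radii at which r^\<sigma> is 1 and purely imaginary separate \<phi>
     and X = conj \<psi>, which solve a coupled system. The weighted energy
     H = (k1 - k2)(|\<phi>|^2 - |X|^2) exp(-k1 t) has derivative (k1 - k2)^2 |X|^2 exp(-k1 t),
     where k1 \<noteq> k2 because Re lam > 0. So H is nondecreasing, and it vanishes on
     t0 + 2pi Z because |\<phi>(t0)| = |X(t0)| and \<phi>, X are periodic; hence H = 0 and
     H' = 0, which forces X = 0 and then \<phi> = 0.
   Either way w vanishes identically, contradicting nontriviality. *)

theory Submission
  imports Defs
begin

lemma norm_square_has_real_derivative:
  fixes f :: "real \<Rightarrow> complex"
  assumes "(f has_vector_derivative f') (at t)"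
  shows "((\<lambda>s. (cmod (f s))\<^sup>2) has_real_derivative 2 * Re (cnj (f t) * f')) (at t)"
proof -
  have "((\<lambda>s. cnj (f s) * f s) has_vector_derivative cnj (f t) * f' + cnj f' * f t) (at t)"
    by (intro derivative_intros assms)
  from bounded_linear.has_vector_derivative[OF bounded_linear_Re this]
  have "((\<lambda>s. Re (cnj (f s) * f s)) has_real_derivative 2 * Re (cnj (f t) * f')) (at t)"
    by (simp add: has_real_derivative_iff_has_vector_derivative mult.commute)
  moreover have "(\<lambda>s. Re (cnj (f s) * f s)) = (\<lambda>s. (cmod (f s))\<^sup>2)"
    by (simp add: cmod_def power2_eq_square)
  ultimately show ?thesis by simp
qed

(* Gronwall in its simplest form: a quantity vanishing at t0 and growing at most
   linearly in itself stays non-positive, since E(t) exp(-K t) is nonincreasing. *)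
lemma gronwall_vanishing_forward:
  fixes E E' :: "real \<Rightarrow> real"
  assumes "t0 \<le> t1"
    and deriv: "\<And>x. t0 \<le> x \<Longrightarrow> x \<le> t1 \<Longrightarrow> (E has_real_derivative E' x) (at x)"
    and growth: "\<And>x. t0 \<le> x \<Longrightarrow> x \<le> t1 \<Longrightarrow> E' x \<le> K * E x"
    and "E t0 = 0"
  shows "E t1 \<le> 0"
proof -
  define F where "F x = E x * exp (- K * x)" for x
  have "F t1 \<le> F t0"
  proof (rule DERIV_nonpos_imp_nonincreasing[OF \<open>t0 \<le> t1\<close>])
    fix x assume x: "t0 \<le> x" "x \<le> t1"
    have "(F has_real_derivative (E' x - K * E x) * exp (- K * x)) (at x)"
      unfolding F_def using x
      by (auto intro!: derivative_eq_intros deriv simp: algebra_simps)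
    moreover have "(E' x - K * E x) * exp (- K * x) \<le> 0"
      using growth[OF x] by (simp add: mult_nonpos_nonneg)
    ultimately show "\<exists>y. (F has_real_derivative y) (at x) \<and> y \<le> 0" by blast
  qed
  then show ?thesis using \<open>E t0 = 0\<close> by (simp add: F_def mult_le_0_iff)
qed

(* Two-sided version: with |E'| \<le> K E the argument runs in either direction of time,
   the backward case being the forward one for the mirrored function E(-s). *)
lemma gronwall_vanishing:
  fixes E E' :: "real \<Rightarrow> real"
  assumes deriv: "\<And>x. x \<in> closed_segment t0 t1 \<Longrightarrow> (E has_real_derivative E' x) (at x)"
    and growth: "\<And>x. x \<in> closed_segment t0 t1 \<Longrightarrow> \<bar>E' x\<bar> \<le> K * E x"
    and "E t0 = 0"
  shows "E t1 \<le> 0"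
proof (cases "t0 \<le> t1")
  case True
  show ?thesis
    by (rule gronwall_vanishing_forward[OF True, where E'=E'])
       (use True deriv growth \<open>E t0 = 0\<close> in \<open>auto simp: closed_segment_eq_real_ivl abs_le_iff\<close>)
next
  case False
  have "E (- (- t1)) \<le> 0"
  proof (rule gronwall_vanishing_forward[where E="\<lambda>s. E (- s)" and E'="\<lambda>s. - E' (- s)"])
    fix x assume "- t0 \<le> x" "x \<le> - t1"
    then have seg: "- x \<in> closed_segment t0 t1"
      using False by (auto simp: closed_segment_eq_real_ivl)
    show "((\<lambda>s. E (- s)) has_real_derivative - E' (- x)) (at x)"
      using deriv[OF seg] by (simp add: DERIV_mirror)
    show "- E' (- x) \<le> K * E (- x)"
      using growth[OF seg] by linarith
  qed (use False \<open>E t0 = 0\<close> in auto)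
  then show ?thesis by simp
qed

(* Uniqueness for linear ODEs: if |u'| \<le> m |u| with m continuous, a zero of u
   propagates to all times (apply Gronwall to |u|^2 on the segment between them). *)
lemma vanishing_propagates_linear_growth:
  fixes u u' :: "real \<Rightarrow> complex" and m :: "real \<Rightarrow> real"
  assumes deriv: "\<And>t. (u has_vector_derivative u' t) (at t)"
    and growth: "\<And>t. cmod (u' t) \<le> m t * cmod (u t)"
    and m_cont: "continuous_on UNIV m"
    and "u t0 = 0"
  shows "u t1 = 0"
proof -
  have "compact (m ` closed_segment t0 t1)"
    by (rule compact_continuous_image) (use m_cont continuous_on_subset in auto)
  then obtain B where "\<forall>y \<in> m ` closed_segment t0 t1. norm y \<le> B"
    using compact_imp_bounded bounded_iff by blast
  then have B: "\<And>x. x \<in> closed_segment t0 t1 \<Longrightarrow> \<bar>m x\<bar> \<le> B"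
    by (metis image_eqI real_norm_def)
  have "(cmod (u t1))\<^sup>2 \<le> 0"
  proof (rule gronwall_vanishing[where E="\<lambda>s. (cmod (u s))\<^sup>2" and E'="\<lambda>x. 2 * Re (cnj (u x) * u' x)" and K="2 * B"])
    fix x assume x: "x \<in> closed_segment t0 t1"
    show "((\<lambda>s. (cmod (u s))\<^sup>2) has_real_derivative 2 * Re (cnj (u x) * u' x)) (at x)"
      by (rule norm_square_has_real_derivative[OF deriv])
    have "\<bar>2 * Re (cnj (u x) * u' x)\<bar> \<le> 2 * (cmod (u x) * cmod (u' x))"
      using abs_Re_le_cmod[of "cnj (u x) * u' x"] by (simp add: norm_mult)
    also have "\<dots> \<le> 2 * (cmod (u x) * (B * cmod (u x)))"
    proof -
      have "m x * cmod (u x) \<le> B * cmod (u x)"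
        using B[OF x] by (intro mult_right_mono) auto
      then show ?thesis using growth[of x] by (simp add: mult_left_mono)
    qed
    finally show "\<bar>2 * Re (cnj (u x) * u' x)\<bar> \<le> 2 * B * (cmod (u x))\<^sup>2"
      by (simp add: power2_eq_square algebra_simps)
  qed (simp add: \<open>u t0 = 0\<close>)
  then show ?thesis by simp
qed

lemma periodic2pi_int_shift:
  assumes "periodic2pi f"
  shows "f (t + 2 * pi * of_int n) = f t"
proof (induction n rule: int_induct[where k=0])
  case base
  show ?case by simp
next
  case (step1 i)
  have "f (t + 2 * pi * of_int (i + 1)) = f ((t + 2 * pi * of_int i) + 2 * pi)"
    by (simp add: algebra_simps)
  with step1 assms show ?case by (simp add: periodic2pi_def)
next
  case (step2 i)
  have "f (t + 2 * pi * of_int i) = f ((t + 2 * pi * of_int (i - 1)) + 2 * pi)"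
    by (simp add: algebra_simps)
  with step2 assms show ?case by (simp add: periodic2pi_def)
qed

(* A nondecreasing function vanishing on a lattice t0 + p Z vanishes identically,
   being squeezed between two consecutive lattice points. *)
lemma mono_vanishing_on_lattice:
  fixes H :: "real \<Rightarrow> real"
  assumes "mono H" and "p > 0" and zero: "\<And>n::int. H (t0 + p * of_int n) = 0"
  shows "H t = 0"
proof -
  define n where "n = \<lfloor>(t - t0) / p\<rfloor>"
  have "of_int n \<le> (t - t0) / p" "(t - t0) / p < of_int n + 1"
    unfolding n_def by linarith+
  then have "t0 + p * of_int n \<le> t" "t \<le> t0 + p * of_int (n + 1)"
    using \<open>p > 0\<close> by (simp_all add: field_simps)
  then have "H (t0 + p * of_int n) \<le> H t" "H t \<le> H (t0 + p * of_int (n + 1))"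
    using \<open>mono H\<close> by (auto dest: monoD)
  then show ?thesis using zero[of n] zero[of "n + 1"] by linarith
qed

lemma mono_if_nonneg_derivative:
  fixes H h :: "real \<Rightarrow> real"
  assumes "\<And>s. (H has_real_derivative h s) (at s)" and "\<And>s. h s \<ge> 0"
  shows "mono H"
proof (rule monoI)
  fix x y :: real assume "x \<le> y"
  show "H x \<le> H y"
    by (rule DERIV_nonneg_imp_nondecreasing[OF \<open>x \<le> y\<close>]) (use assms in blast)
qed

(* Weighted energy: if D = A - B has D' = k1 A - k2 B, the weight exp(-k1 t) removes the
   A-term, and (k1 - k2) D exp(-k1 t) grows at the rate (k1 - k2)^2 B exp(-k1 t). *)
lemma weighted_energy_derivative:
  fixes A B :: "real \<Rightarrow> real"
  assumes "((\<lambda>s. A s - B s) has_real_derivative k1 * A t - k2 * B t) (at t)"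
  shows "((\<lambda>s. (k1 - k2) * (A s - B s) * exp (- k1 * s)) has_real_derivative
           (k1 - k2)\<^sup>2 * B t * exp (- k1 * t)) (at t)"
proof -
  have "((\<lambda>s. exp (- k1 * s)) has_real_derivative exp (- k1 * t) * (- k1)) (at t)"
    by (auto intro!: derivative_eq_intros)
  from DERIV_cmult[OF DERIV_mult[OF assms this], of "k1 - k2"]
  have "((\<lambda>s. (k1 - k2) * (A s - B s) * exp (- k1 * s)) has_real_derivative
          (k1 - k2) * ((k1 * A t - k2 * B t) * exp (- k1 * t) + exp (- k1 * t) * (- k1) * (A t - B t))) (at t)"
    by (simp add: mult.assoc)
  moreover have "(k1 - k2) * ((k1 * A t - k2 * B t) * exp (- k1 * t) + exp (- k1 * t) * (- k1) * (A t - B t))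
      = (k1 - k2)\<^sup>2 * B t * exp (- k1 * t)"
    by (simp add: algebra_simps power2_eq_square)
  ultimately show ?thesis by simp
qed

(* A C^k function with k \<ge> 1 is continuous; this is all the regularity of c we need. *)
lemma Ck_fun_continuous:
  assumes "Ck_fun k f" and "k \<ge> 1"
  shows "continuous_on UNIV f"
proof -
  obtain D :: "nat \<Rightarrow> real \<Rightarrow> complex" where "D 0 = f"
    and "\<forall>j<k. \<forall>t. (D j has_vector_derivative D (Suc j) t) (at t)"
    using assms(1) unfolding Ck_fun_def by blast
  then have "\<And>t. (f has_vector_derivative D 1 t) (at t)" using \<open>k \<ge> 1\<close> by auto
  then show ?thesis
    by (intro continuous_at_imp_continuous_on ballI has_vector_derivative_continuous) blast
qed

lemma of_real_powr_eq_exp: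
  "r > 0 \<Longrightarrow> complex_of_real r powr \<sigma> = exp (\<sigma> * complex_of_real (ln r))"
  by (simp add: powr_def Ln_of_real)

lemma has_vector_derivative_of_real_powr:
  assumes "r > 0"
  shows "((\<lambda>\<rho>. complex_of_real \<rho> powr \<sigma>) has_vector_derivative
           \<sigma> / complex_of_real r * complex_of_real r powr \<sigma>) (at r)"
proof -
  have log_deriv: "((\<lambda>\<rho>. \<sigma> * complex_of_real (ln \<rho>)) has_vector_derivative \<sigma> / complex_of_real r) (at r)"
    using assms by (auto intro!: derivative_eq_intros simp: divide_inverse)
  have "((exp \<circ> (\<lambda>\<rho>. \<sigma> * complex_of_real (ln \<rho>))) has_vector_derivative
          \<sigma> / complex_of_real r * exp (\<sigma> * complex_of_real (ln r))) (at r)"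
    by (rule field_vector_diff_chain_at[OF log_deriv DERIV_exp])
  then have "((\<lambda>\<rho>. exp (\<sigma> * complex_of_real (ln \<rho>))) has_vector_derivative
          \<sigma> / complex_of_real r * complex_of_real r powr \<sigma>) (at r)"
    using assms by (simp add: o_def of_real_powr_eq_exp)
  then show ?thesis
    by (rule has_vector_derivative_transform_within_open[where S="{0<..}"])
       (use assms in \<open>auto simp: of_real_powr_eq_exp\<close>)
qed

(* If \<sigma> is not real, some radius r makes r^\<sigma> purely imaginary
   (take ln r = pi / (2 Im \<sigma>)). *)
lemma of_real_powr_imaginary:
  assumes "Im \<sigma> \<noteq> 0"
  obtains r \<rho> :: real where "r > 0" and "\<rho> > 0" and "complex_of_real r powr \<sigma> = complex_of_real \<rho> * \<i>"
proof
  define x where "x = pi / (2 * Im \<sigma>)"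
  have "complex_of_real (exp x) powr \<sigma> = exp (complex_of_real (Re \<sigma> * x) + \<i> * complex_of_real (pi / 2))"
  proof -
    have "\<sigma> * complex_of_real x = complex_of_real (Re \<sigma> * x) + \<i> * complex_of_real (pi / 2)"
      using assms by (simp add: complex_eq_iff x_def)
    then show ?thesis by (simp add: of_real_powr_eq_exp)
  qed
  also have "\<dots> = complex_of_real (exp (Re \<sigma> * x)) * \<i>"
  proof -
    have "exp (\<i> * complex_of_real (pi / 2)) = \<i>"
      using cis_conv_exp[of "pi / 2"] by simp
    then show ?thesis by (simp only: exp_add exp_of_real)
  qed
  finally show "complex_of_real (exp x) powr \<sigma> = complex_of_real (exp (Re \<sigma> * x)) * \<i>" .
qed auto

lemma time_derivative_equation:
  assumes sol: "solves_Leps a b \<nu> \<epsilon> c w"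
    and rep: "\<forall>r>0. \<forall>t. w r t = complex_of_real r powr \<sigma> * \<phi> t + cnj (complex_of_real r powr \<sigma> * \<psi> t)"
    and r: "r > 0"
  obtains Dt where "\<And>t. ((\<lambda>s. w r s) has_vector_derivative Dt t) (at t)"
    and "\<And>t. lam a b \<epsilon> * Dt t =
            \<i> * (\<sigma> * complex_of_real r powr \<sigma> * \<phi> t + cnj (\<sigma> * complex_of_real r powr \<sigma> * \<psi> t))
            - \<i> * lam a b \<epsilon> * complex_of_real \<nu> * w r t + c t * cnj (w r t)"
proof -
  define E where "E = complex_of_real r powr \<sigma>"
  have "\<exists>Dt. ((\<lambda>s. w r s) has_vector_derivative Dt) (at t) \<and>
          lam a b \<epsilon> * Dt = \<i> * (\<sigma> * E * \<phi> t + cnj (\<sigma> * E * \<psi> t))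
            - \<i> * lam a b \<epsilon> * complex_of_real \<nu> * w r t + c t * cnj (w r t)" for t
  proof -
    obtain Dt Dr where Dt: "((\<lambda>s. w r s) has_vector_derivative Dt) (at t)"
      and Dr: "((\<lambda>\<rho>. w \<rho> t) has_vector_derivative Dr) (at r)"
      and eq: "lam a b \<epsilon> * Dt - \<i> * complex_of_real r * Dr
          + \<i> * lam a b \<epsilon> * complex_of_real \<nu> * w r t - c t * cnj (w r t) = 0"
      using sol r unfolding solves_Leps_def by blast
    define D where "D = \<sigma> / complex_of_real r * E"
    have "((\<lambda>\<rho>. complex_of_real \<rho> powr \<sigma> * \<phi> t + cnj (complex_of_real \<rho> powr \<sigma> * \<psi> t))
            has_vector_derivative D * \<phi> t + cnj (D * \<psi> t)) (at r)"
      unfolding D_def E_def using has_vector_derivative_of_real_powr[OF r]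
      by (intro derivative_intros) auto
    then have "((\<lambda>\<rho>. w \<rho> t) has_vector_derivative D * \<phi> t + cnj (D * \<psi> t)) (at r)"
      by (rule has_vector_derivative_transform_within_open[where S="{0<..}"]) (use r rep in auto)
    then have "Dr = D * \<phi> t + cnj (D * \<psi> t)"
      using vector_derivative_unique_at[OF Dr] by blast
    then have "complex_of_real r * Dr = \<sigma> * E * \<phi> t + cnj (\<sigma> * E * \<psi> t)"
      using r by (simp add: D_def field_simps)
    with Dt eq show ?thesis by (intro exI[of _ Dt]) (auto simp: algebra_simps)
  qed
  then show ?thesis using that unfolding E_def by metis
qed

lemma linear_equation_growth:
  fixes L \<alpha> \<gamma> d u :: complex
  assumes "L \<noteq> 0" and "L * d = \<alpha> * u + \<gamma> * cnj u"
  shows "cmod d \<le> (cmod \<alpha> + cmod \<gamma>) / cmod L * cmod u"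
proof -
  have "cmod L * cmod d \<le> cmod (\<alpha> * u) + cmod (\<gamma> * cnj u)"
    using assms(2) norm_triangle_ineq[of "\<alpha> * u" "\<gamma> * cnj u"] by (simp add: norm_mult[symmetric])
  also have "\<dots> = (cmod \<alpha> + cmod \<gamma>) * cmod u"
    by (simp add: norm_mult algebra_simps)
  finally show ?thesis using assms(1) by (simp add: field_simps)
qed

(* Real exponent: w(r,t) = r^\<sigma> u(t) with u = \<phi> + conj \<psi> solving a linear ODE
   with continuous coefficients, so one zero of w forces u, hence w, to vanish. *)
lemma real_exponent_vanishing:
  assumes sol: "solves_Leps a b \<nu> \<epsilon> c w"
    and rep: "\<forall>r>0. \<forall>t. w r t = complex_of_real r powr \<sigma> * \<phi> t + cnj (complex_of_real r powr \<sigma> * \<psi> t)"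
    and real_exp: "Im \<sigma> = 0" and lam_nonzero: "lam a b \<epsilon> \<noteq> 0" and c_cont: "continuous_on UNIV c"
    and "r0 > 0" and "w r0 t0 = 0" and "r > 0"
  shows "w r t = 0"
proof -
  define L where "L = lam a b \<epsilon>"
  define u where "u t = \<phi> t + cnj (\<psi> t)" for t
  have \<sigma>_real: "\<sigma> = complex_of_real (Re \<sigma>)"
    using real_exp by (simp add: complex_eq_iff)
  have scale: "w \<rho> s = complex_of_real (\<rho> powr Re \<sigma>) * u s" if "\<rho> > 0" for \<rho> s
  proof -
    have "complex_of_real \<rho> powr \<sigma> = complex_of_real (\<rho> powr Re \<sigma>)"
      using that by (subst \<sigma>_real) (simp add: powr_of_real)
    then show ?thesis using rep that by (simp add: u_def algebra_simps)
  qed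
  obtain d where d: "\<And>t. ((\<lambda>s. w 1 s) has_vector_derivative d t) (at t)"
    and d_eq: "\<And>t. L * d t = \<i> * (\<sigma> * complex_of_real 1 powr \<sigma> * \<phi> t + cnj (\<sigma> * complex_of_real 1 powr \<sigma> * \<psi> t))
            - \<i> * L * complex_of_real \<nu> * w 1 t + c t * cnj (w 1 t)"
    using time_derivative_equation[OF sol rep, of 1] unfolding L_def by auto
  have "(\<lambda>s. w 1 s) = u" using scale[of 1] by auto
  then have u_deriv: "(u has_vector_derivative d t) (at t)" for t
    using d by simp
  have u_eq: "L * d t = (\<i> * \<sigma> - \<i> * L * complex_of_real \<nu>) * u t + c t * cnj (u t)" for t
  proof -
    have "cnj \<sigma> = \<sigma>" using real_exp by (simp add: complex_eq_iff)
    then show ?thesis using d_eq[of t] scale[of 1 t] by (simp add: u_def algebra_simps)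
  qed
  define m where "m t = (cmod (\<i> * \<sigma> - \<i> * L * complex_of_real \<nu>) + cmod (c t)) / cmod L" for t
  have growth: "cmod (d t) \<le> m t * cmod (u t)" for t
    unfolding m_def using lam_nonzero u_eq by (intro linear_equation_growth) (simp_all add: L_def)
  have "continuous_on UNIV m"
    unfolding m_def by (intro continuous_intros c_cont) (simp add: lam_nonzero L_def)
  moreover have "u t0 = 0"
    using scale[of r0 t0] \<open>r0 > 0\<close> \<open>w r0 t0 = 0\<close> by simp
  ultimately have "u t = 0"
    using vanishing_propagates_linear_growth[OF u_deriv growth] by blast
  then show ?thesis using scale[OF \<open>r > 0\<close>] by simp
qed

lemma slice_combination:
  fixes L \<sigma> m d1 d2 \<phi> X \<gamma> :: complex and \<nu> :: real
  assumes "m \<noteq> 0"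
    and e1: "L * d1 = \<i> * (\<sigma> * \<phi> + cnj \<sigma> * X) - \<i> * L * of_real \<nu> * (\<phi> + X)
        + \<gamma> * (cnj \<phi> + cnj X)"
    and e2: "L * d2 = m * (\<i> * (\<sigma> * \<phi> - cnj \<sigma> * X) - \<i> * L * of_real \<nu> * (\<phi> - X)
        + \<gamma> * (cnj X - cnj \<phi>))"
  shows "L * ((d1 + d2 / m) / 2) = \<i> * \<sigma> * \<phi> - \<i> * L * of_real \<nu> * \<phi> + \<gamma> * cnj X"
    and "L * ((d1 - d2 / m) / 2) = \<i> * cnj \<sigma> * X - \<i> * L * of_real \<nu> * X + \<gamma> * cnj \<phi>"
proof -
  have "L * ((d1 + d2 / m) / 2) = (L * d1 + L * d2 / m) / 2"
    and "L * ((d1 - d2 / m) / 2) = (L * d1 - L * d2 / m) / 2"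
    by (simp_all add: field_simps)
  then show "L * ((d1 + d2 / m) / 2) = \<i> * \<sigma> * \<phi> - \<i> * L * of_real \<nu> * \<phi> + \<gamma> * cnj X"
    and "L * ((d1 - d2 / m) / 2) = \<i> * cnj \<sigma> * X - \<i> * L * of_real \<nu> * X + \<gamma> * cnj \<phi>"
    unfolding e1 e2 using \<open>m \<noteq> 0\<close> by (simp_all add: field_simps)
qed

(* Non-real exponent: the slices r = 1 and r = r2 (with r2^\<sigma> = m imaginary) are
   \<phi> + X and m (\<phi> - X), X = conj \<psi>; solving for \<phi> and X shows both are differentiable
   and satisfy a coupled first-order system. *)
lemma decoupled_system:
  assumes sol: "solves_Leps a b \<nu> \<epsilon> c w"
    and rep: "\<forall>r>0. \<forall>t. w r t = complex_of_real r powr \<sigma> * \<phi> t + cnj (complex_of_real r powr \<sigma> * \<psi> t)"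
    and "Im \<sigma> \<noteq> 0"
  obtains p q where "\<And>t. (\<phi> has_vector_derivative p t) (at t)"
    and "\<And>t. ((\<lambda>s. cnj (\<psi> s)) has_vector_derivative q t) (at t)"
    and "\<And>t. lam a b \<epsilon> * p t = \<i> * \<sigma> * \<phi> t - \<i> * lam a b \<epsilon> * of_real \<nu> * \<phi> t + c t * \<psi> t"
    and "\<And>t. lam a b \<epsilon> * q t = \<i> * cnj \<sigma> * cnj (\<psi> t) - \<i> * lam a b \<epsilon> * of_real \<nu> * cnj (\<psi> t) + c t * cnj (\<phi> t)"
proof -
  define L where "L = lam a b \<epsilon>"
  define X where "X t = cnj (\<psi> t)" for t
  obtain r2 \<rho> where "r2 > 0" "\<rho> > 0" and r2_powr: "complex_of_real r2 powr \<sigma> = complex_of_real \<rho> * \<i>"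
    using of_real_powr_imaginary[OF \<open>Im \<sigma> \<noteq> 0\<close>] by blast
  define m where "m = complex_of_real \<rho> * \<i>"
  have "m \<noteq> 0" and cnj_m: "cnj m = - m" using \<open>\<rho> > 0\<close> by (simp_all add: m_def)
  have r2_m: "complex_of_real r2 powr \<sigma> = m" using r2_powr by (simp add: m_def)
  have w1: "w 1 t = \<phi> t + X t" for t using rep by (simp add: X_def of_real_powr_eq_exp)
  have w2: "w r2 t = m * (\<phi> t - X t)" for t
    using rep \<open>r2 > 0\<close> by (simp add: X_def r2_m cnj_m algebra_simps)
  obtain d1 where d1: "\<And>t. ((\<lambda>s. w 1 s) has_vector_derivative d1 t) (at t)"
    and d1_eq: "\<And>t. L * d1 t = \<i> * (\<sigma> * complex_of_real 1 powr \<sigma> * \<phi> t + cnj (\<sigma> * complex_of_real 1 powr \<sigma> * \<psi> t))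
            - \<i> * L * complex_of_real \<nu> * w 1 t + c t * cnj (w 1 t)"
    using time_derivative_equation[OF sol rep, of 1] unfolding L_def by auto
  obtain d2 where d2: "\<And>t. ((\<lambda>s. w r2 s) has_vector_derivative d2 t) (at t)"
    and d2_eq: "\<And>t. L * d2 t = \<i> * (\<sigma> * complex_of_real r2 powr \<sigma> * \<phi> t + cnj (\<sigma> * complex_of_real r2 powr \<sigma> * \<psi> t))
            - \<i> * L * complex_of_real \<nu> * w r2 t + c t * cnj (w r2 t)"
    using time_derivative_equation[OF sol rep \<open>r2 > 0\<close>] unfolding L_def by auto
  define p where "p t = (d1 t + d2 t / m) / 2" for t
  define q where "q t = (d1 t - d2 t / m) / 2" for t
  have \<phi>_eq: "\<phi> = (\<lambda>s. (w 1 s + w r2 s / m) / 2)" and X_eq: "X = (\<lambda>s. (w 1 s - w r2 s / m) / 2)"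
    using \<open>m \<noteq> 0\<close> by (simp_all add: fun_eq_iff w1 w2 field_simps)
  have "(\<phi> has_vector_derivative p t) (at t)" for t
    unfolding \<phi>_eq p_def using d1[of t] d2[of t] by (auto intro!: derivative_eq_intros)
  moreover have "(X has_vector_derivative q t) (at t)" for t
    unfolding X_eq q_def using d1[of t] d2[of t] by (auto intro!: derivative_eq_intros)
  moreover have "L * p t = \<i> * \<sigma> * \<phi> t - \<i> * L * of_real \<nu> * \<phi> t + c t * \<psi> t"
    and "L * q t = \<i> * cnj \<sigma> * X t - \<i> * L * of_real \<nu> * X t + c t * cnj (\<phi> t)" for t
  proof -
    have e1: "L * d1 t = \<i> * (\<sigma> * \<phi> t + cnj \<sigma> * X t) - \<i> * L * of_real \<nu> * (\<phi> t + X t)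
        + c t * (cnj (\<phi> t) + cnj (X t))"
      using d1_eq[of t] by (simp add: w1 X_def of_real_powr_eq_exp)
    have e2: "L * d2 t = m * (\<i> * (\<sigma> * \<phi> t - cnj \<sigma> * X t) - \<i> * L * of_real \<nu> * (\<phi> t - X t)
        + c t * (cnj (X t) - cnj (\<phi> t)))"
      using d2_eq[of t] by (simp add: w2 X_def r2_m cnj_m algebra_simps)
    show "L * p t = \<i> * \<sigma> * \<phi> t - \<i> * L * of_real \<nu> * \<phi> t + c t * \<psi> t"
      using slice_combination(1)[OF \<open>m \<noteq> 0\<close> e1 e2] by (simp add: p_def X_def)
    show "L * q t = \<i> * cnj \<sigma> * X t - \<i> * L * of_real \<nu> * X t + c t * cnj (\<phi> t)"
      using slice_combination(2)[OF \<open>m \<noteq> 0\<close> e1 e2] by (simp add: q_def)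
  qed
  ultimately show ?thesis using that unfolding L_def X_def by blast
qed

(* For that coupled system the coupling terms cancel in the energy |\<phi>|^2 - |X|^2,
   whose derivative is k1 |\<phi>|^2 - k2 |X|^2 with k1 = 2 Re (i\<sigma>/L), k2 = 2 Re (i conj \<sigma>/L). *)
lemma coupled_energy_derivative:
  fixes L \<sigma> :: complex and \<nu> :: real and \<phi> X p q c :: "real \<Rightarrow> complex"
  assumes L: "L \<noteq> 0"
    and \<phi>_deriv: "(\<phi> has_vector_derivative p t) (at t)"
    and X_deriv: "(X has_vector_derivative q t) (at t)"
    and \<phi>_eq: "L * p t = \<i> * \<sigma> * \<phi> t - \<i> * L * of_real \<nu> * \<phi> t + c t * cnj (X t)"
    and X_eq: "L * q t = \<i> * cnj \<sigma> * X t - \<i> * L * of_real \<nu> * X t + c t * cnj (\<phi> t)"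
  shows "((\<lambda>s. (cmod (\<phi> s))\<^sup>2 - (cmod (X s))\<^sup>2) has_real_derivative
           2 * Re (\<i> * \<sigma> / L) * (cmod (\<phi> t))\<^sup>2 - 2 * Re (\<i> * cnj \<sigma> / L) * (cmod (X t))\<^sup>2) (at t)"
proof -
  define P where "P = complex_of_real ((cmod (\<phi> t))\<^sup>2)"
  define Q where "Q = complex_of_real ((cmod (X t))\<^sup>2)"
  have P: "cnj (\<phi> t) * \<phi> t = P" and Q: "cnj (X t) * X t = Q"
    unfolding P_def Q_def by (simp_all add: complex_mult_cnj mult.commute cmod_power2)
  have "cnj (\<phi> t) * p t - cnj (X t) * q t =
      \<i> * \<sigma> / L * (cnj (\<phi> t) * \<phi> t) - \<i> * cnj \<sigma> / L * (cnj (X t) * X t)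
       - \<i> * of_real \<nu> * (cnj (\<phi> t) * \<phi> t - cnj (X t) * X t)"
  proof -
    have p: "p t = (\<i> * \<sigma> * \<phi> t - \<i> * L * of_real \<nu> * \<phi> t + c t * cnj (X t)) / L"
      using \<phi>_eq L by (simp add: field_simps)
    have q: "q t = (\<i> * cnj \<sigma> * X t - \<i> * L * of_real \<nu> * X t + c t * cnj (\<phi> t)) / L"
      using X_eq L by (simp add: field_simps)
    show ?thesis unfolding p q using L by (simp add: field_simps)
  qed
  also have "\<dots> = \<i> * \<sigma> / L * P - \<i> * cnj \<sigma> / L * Q - \<i> * of_real \<nu> * (P - Q)"
    by (simp only: P Q)
  finally have "Re (cnj (\<phi> t) * p t - cnj (X t) * q t)
      = Re (\<i> * \<sigma> / L * P - \<i> * cnj \<sigma> / L * Q - \<i> * of_real \<nu> * (P - Q))"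
    by simp
  also have "\<dots> = Re (\<i> * \<sigma> / L) * (cmod (\<phi> t))\<^sup>2 - Re (\<i> * cnj \<sigma> / L) * (cmod (X t))\<^sup>2"
  proof -
    have Re_scale: "Re (z * complex_of_real x) = Re z * x" for z x by simp
    show ?thesis unfolding P_def Q_def minus_complex.sel Re_scale by simp
  qed
  finally have rate: "2 * Re (cnj (\<phi> t) * p t) - 2 * Re (cnj (X t) * q t)
      = 2 * Re (\<i> * \<sigma> / L) * (cmod (\<phi> t))\<^sup>2 - 2 * Re (\<i> * cnj \<sigma> / L) * (cmod (X t))\<^sup>2"
    by simp
  show ?thesis
    unfolding rate[symmetric] by (intro DERIV_diff norm_square_has_real_derivative \<phi>_deriv X_deriv)
qed

(* The two rates differ: k1 - k2 = -4 Im \<sigma> Re L / |L|^2, nonzero when Re L > 0. *)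
lemma energy_rate_gap:
  fixes L \<sigma> :: complex
  assumes "Re L > 0" and "Im \<sigma> \<noteq> 0"
  shows "Re (\<i> * \<sigma> / L) \<noteq> Re (\<i> * cnj \<sigma> / L)"
proof -
  have "Re (\<i> * \<sigma> / L) - Re (\<i> * cnj \<sigma> / L) = Re (\<i> * (\<sigma> - cnj \<sigma>) / L)"
    by (simp add: right_diff_distrib diff_divide_distrib)
  also have "\<dots> = - 2 * Im \<sigma> * Re L / (cmod L)\<^sup>2"
    by (simp add: complex_diff_cnj Re_divide cmod_power2)
  finally show ?thesis using assms by auto
qed

(* Core of the non-real case: H = (k1 - k2) D exp(-k1 t), D = |\<phi>|^2 - |X|^2, has
   derivative (k1 - k2)^2 |X|^2 exp(-k1 t) \<ge> 0. A point with |\<phi>| = |X| gives, by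
   periodicity, zeros of H on t0 + 2pi Z, so H = 0, hence H' = 0 and X = \<phi> = 0. *)
lemma coupled_system_vanishing:
  fixes L \<sigma> :: complex and \<nu> :: real and \<phi> X p q c :: "real \<Rightarrow> complex"
  assumes ReL: "Re L > 0" and Im\<sigma>: "Im \<sigma> \<noteq> 0"
    and \<phi>_deriv: "\<And>t. (\<phi> has_vector_derivative p t) (at t)"
    and X_deriv: "\<And>t. (X has_vector_derivative q t) (at t)"
    and \<phi>_eq: "\<And>t. L * p t = \<i> * \<sigma> * \<phi> t - \<i> * L * of_real \<nu> * \<phi> t + c t * cnj (X t)"
    and X_eq: "\<And>t. L * q t = \<i> * cnj \<sigma> * X t - \<i> * L * of_real \<nu> * X t + c t * cnj (\<phi> t)"
    and "periodic2pi \<phi>" and "periodic2pi X"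
    and balanced: "cmod (\<phi> t0) = cmod (X t0)"
  shows "\<phi> t = 0 \<and> X t = 0"
proof -
  define k1 where "k1 = 2 * Re (\<i> * \<sigma> / L)"
  define k2 where "k2 = 2 * Re (\<i> * cnj \<sigma> / L)"
  define \<kappa> where "\<kappa> = k1 - k2"
  have "\<kappa> \<noteq> 0" unfolding \<kappa>_def k1_def k2_def using energy_rate_gap[OF ReL Im\<sigma>] by simp
  define D where "D s = (cmod (\<phi> s))\<^sup>2 - (cmod (X s))\<^sup>2" for s
  define H where "H s = \<kappa> * D s * exp (- k1 * s)" for s
  have "((\<lambda>s. (cmod (\<phi> s))\<^sup>2 - (cmod (X s))\<^sup>2) has_real_derivative
          k1 * (cmod (\<phi> s))\<^sup>2 - k2 * (cmod (X s))\<^sup>2) (at s)" for s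
    unfolding k1_def k2_def
    by (rule coupled_energy_derivative[OF _ \<phi>_deriv X_deriv \<phi>_eq X_eq]) (use ReL in auto)
  then have H_deriv: "(H has_real_derivative \<kappa>\<^sup>2 * (cmod (X s))\<^sup>2 * exp (- k1 * s)) (at s)" for s
    unfolding H_def D_def \<kappa>_def by (rule weighted_energy_derivative)
  have "mono H"
    by (rule mono_if_nonneg_derivative[OF H_deriv]) simp
  moreover have "H (t0 + 2 * pi * of_int n) = 0" for n :: int
  proof -
    have "periodic2pi D"
      using \<open>periodic2pi \<phi>\<close> \<open>periodic2pi X\<close> by (simp add: periodic2pi_def D_def)
    then have "D (t0 + 2 * pi * of_int n) = D t0" by (rule periodic2pi_int_shift)
    then show ?thesis using balanced by (simp add: H_def D_def)
  qed
  ultimately have H_zero: "H = (\<lambda>_. 0)"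
    using mono_vanishing_on_lattice[of H "2 * pi" t0] by auto
  have "\<kappa>\<^sup>2 * (cmod (X t))\<^sup>2 * exp (- k1 * t) = 0"
    using H_deriv[of t] unfolding H_zero by (rule DERIV_unique) (rule DERIV_const)
  then have "X t = 0" using \<open>\<kappa> \<noteq> 0\<close> by simp
  moreover have "D t = 0" using fun_cong[OF H_zero, of t] \<open>\<kappa> \<noteq> 0\<close> by (simp add: H_def)
  ultimately show ?thesis by (simp add: D_def)
qed

(* Non-real exponent: a zero of w gives |\<phi>(t0)| = |\<psi>(t0)| since r0^\<sigma> \<noteq> 0,
   so the coupled system vanishes identically and with it w. *)
lemma complex_exponent_vanishing:
  assumes sol: "solves_Leps a b \<nu> \<epsilon> c w"
    and rep: "\<forall>r>0. \<forall>t. w r t = complex_of_real r powr \<sigma> * \<phi> t + cnj (complex_of_real r powr \<sigma> * \<psi> t)"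
    and "periodic2pi \<phi>" and "periodic2pi \<psi>"
    and "Im \<sigma> \<noteq> 0" and "Re (lam a b \<epsilon>) > 0"
    and "r0 > 0" and "w r0 t0 = 0" and "r > 0"
  shows "w r t = 0"
proof -
  obtain p q where p: "\<And>t. (\<phi> has_vector_derivative p t) (at t)"
    and q: "\<And>t. ((\<lambda>s. cnj (\<psi> s)) has_vector_derivative q t) (at t)"
    and p_eq: "\<And>t. lam a b \<epsilon> * p t = \<i> * \<sigma> * \<phi> t - \<i> * lam a b \<epsilon> * of_real \<nu> * \<phi> t + c t * \<psi> t"
    and q_eq: "\<And>t. lam a b \<epsilon> * q t = \<i> * cnj \<sigma> * cnj (\<psi> t) - \<i> * lam a b \<epsilon> * of_real \<nu> * cnj (\<psi> t) + c t * cnj (\<phi> t)"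
    using decoupled_system[OF sol rep \<open>Im \<sigma> \<noteq> 0\<close>] by blast
  have balanced: "cmod (\<phi> t0) = cmod (cnj (\<psi> t0))"
  proof -
    define E where "E = complex_of_real r0 powr \<sigma>"
    have "E \<noteq> 0" using \<open>r0 > 0\<close> by (simp add: E_def of_real_powr_eq_exp)
    have "E * \<phi> t0 = - cnj (E * \<psi> t0)"
      using rep \<open>r0 > 0\<close> \<open>w r0 t0 = 0\<close> by (simp add: E_def eq_neg_iff_add_eq_0)
    then have "cmod E * cmod (\<phi> t0) = cmod E * cmod (\<psi> t0)"
      by (metis complex_mod_cnj norm_minus_cancel norm_mult)
    then show ?thesis using \<open>E \<noteq> 0\<close> by simp
  qed
  have "periodic2pi (\<lambda>s. cnj (\<psi> s))"
    using \<open>periodic2pi \<psi>\<close> by (simp add: periodic2pi_def)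
  have "\<phi> t = 0 \<and> cnj (\<psi> t) = 0"
    by (rule coupled_system_vanishing[where X="\<lambda>s. cnj (\<psi> s)", OF \<open>Re (lam a b \<epsilon>) > 0\<close>
          \<open>Im \<sigma> \<noteq> 0\<close> p q _ _ \<open>periodic2pi \<phi>\<close> \<open>periodic2pi (\<lambda>s. cnj (\<psi> s))\<close> balanced])
       (simp_all add: p_eq q_eq)
  then show ?thesis using rep \<open>r > 0\<close> by simp
qed

theorem proposition2p1:
  fixes a b \<nu> \<epsilon> :: real and k :: nat and c :: "real \<Rightarrow> complex"
    and w :: "real \<Rightarrow> real \<Rightarrow> complex"
  assumes "a > 0" and "b \<noteq> 0" and "0 \<le> \<nu>" and "\<nu> < 1" and "k \<ge> 2"
    and "periodic2pi c" and "Ck_fun k c"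
    and "basic_solution a b \<nu> \<epsilon> c w"
  shows "\<forall>r>0. \<forall>t. w r t \<noteq> 0"
proof (intro allI impI notI)
  fix r0 t0 assume "r0 > 0" and "w r0 t0 = 0"
  obtain \<sigma> \<phi> \<psi> where sol: "solves_Leps a b \<nu> \<epsilon> c w"
    and nontrivial: "\<exists>r>0. \<exists>t. w r t \<noteq> 0"
    and "periodic2pi \<phi>" and "periodic2pi \<psi>"
    and rep: "\<forall>r>0. \<forall>t. w r t = complex_of_real r powr \<sigma> * \<phi> t + cnj (complex_of_real r powr \<sigma> * \<psi> t)"
    using \<open>basic_solution a b \<nu> \<epsilon> c w\<close> unfolding basic_solution_def by blast
  have ReL: "Re (lam a b \<epsilon>) > 0" using \<open>a > 0\<close> by (simp add: lam_def)
  have "w r t = 0" if "r > 0" for r t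
  proof (cases "Im \<sigma> = 0")
    case True
    have "continuous_on UNIV c" using Ck_fun_continuous[OF \<open>Ck_fun k c\<close>] \<open>k \<ge> 2\<close> by simp
    moreover have "lam a b \<epsilon> \<noteq> 0" using ReL by auto
    ultimately show ?thesis
      using real_exponent_vanishing[OF sol rep True] \<open>r0 > 0\<close> \<open>w r0 t0 = 0\<close> that by blast
  next
    case False
    show ?thesis
      by (rule complex_exponent_vanishing[OF sol rep \<open>periodic2pi \<phi>\<close> \<open>periodic2pi \<psi>\<close> False ReL
            \<open>r0 > 0\<close> \<open>w r0 t0 = 0\<close> that])
  qed
  with nontrivial show False by blast
qed

end
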